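(* Let $v_0\in\mathbb{R}^n$ be a unit vector, $\tau>0$, $\epsilon\ge 0$, and let $A\in\mathbb{R}^{n^2\times n}$. Let $T=\tau(v_0\otimes v_0)v_0^T+A\in\mathbb{R}^{n^2\times n}$. Suppose $A^TA=C\cdot\mathrm{Id}_{n\times n}+E$ for some real $C\ge 0$ and a matrix $E$ with $\|E\|\le\epsilon\tau^2$, and that $\|A^T(v_0\otimes v_0)\|\le\epsilon\tau$. Then every unit top eigenvector $u$ of $T^TT$ satisfies $\langle u,v_0\rangle^2\ge 1-O(\epsilon)$.
   Context: $T$ is the $n^2\times n$ unfolding of the tensor $\tau v_0^{\otimes3}+\mathbf{A}$, with $T[(j,k),i]=\mathbf{T}_{ijk}$; norms are operator norms. *)

theory Defs
  imports "Jordan_Normal_Form.Char_Poly"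
begin

definition vnorm :: "real vec \<Rightarrow> real" where
  "vnorm v = sqrt (\<Sum>i<dim_vec v. (v $ i)^2)"

definition op_norm :: "real mat \<Rightarrow> real" where
  "op_norm M = Sup {vnorm (M *\<^sub>v x) | x. x \<in> carrier_vec (dim_col M) \<and> vnorm x = 1}"

text \<open>Kronecker product of two vectors; index (j,k) is flattened to j * dim_vec w + k.\<close>
definition kron_vec :: "real vec \<Rightarrow> real vec \<Rightarrow> real vec" where
  "kron_vec v w = vec (dim_vec v * dim_vec w)
     (\<lambda>r. v $ (r div dim_vec w) * w $ (r mod dim_vec w))"

definition top_eigenvector :: "real mat \<Rightarrow> real vec \<Rightarrow> bool" where
  "top_eigenvector M u = (\<exists>lam. eigenvector M u lam \<and> (\<forall>mu. eigenvalue M mu \<longrightarrow> mu \<le> lam))"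

end

theory Submission
  imports Defs "HOL-Analysis.L2_Norm"
begin

text \<open>
  Put \<open>M = T\<^sup>T T\<close> and \<open>b = A\<^sup>T (v\<^sub>0 \<otimes> v\<^sub>0)\<close>. For every unit vector \<open>x\<close>,
  \<open>x \<bullet> M x = \<tau>\<^sup>2 \<langle>v\<^sub>0, x\<rangle>\<^sup>2 + 2 \<tau> \<langle>v\<^sub>0, x\<rangle> \<langle>b, x\<rangle> + C + x \<bullet> E x\<close>, and the hypotheses
  bound the cross term and the \<open>E\<close>-term by \<open>2 \<epsilon> \<tau>\<^sup>2\<close> and \<open>\<epsilon> \<tau>\<^sup>2\<close>. The largest eigenvalue of
  the symmetric matrix \<open>M\<close> is the supremum of its Rayleigh quotient, so a top unit eigenvector
  \<open>u\<close> satisfies \<open>v\<^sub>0 \<bullet> M v\<^sub>0 \<le> u \<bullet> M u\<close>; comparing the two expansions gives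
  \<open>\<tau>\<^sup>2 (1 - 6 \<epsilon>) \<le> \<tau>\<^sup>2 \<langle>u, v\<^sub>0\<rangle>\<^sup>2\<close>, i.e. the theorem with \<open>K = 6\<close>.
\<close>

lemma vnorm_eq_L2_set: "vnorm v = L2_set (($) v) {..<dim_vec v}"
  unfolding vnorm_def L2_set_def ..

lemma vnorm_eq_sqrt_scalar_prod: "vnorm v = sqrt (v \<bullet> v)"
  unfolding vnorm_def scalar_prod_def by (simp add: power2_eq_square atLeast0LessThan)

lemma scalar_prod_self_nonneg: "0 \<le> (v :: real vec) \<bullet> v"
  unfolding scalar_prod_def by (intro sum_nonneg) auto

lemma vnorm_nonneg: "0 \<le> vnorm v"
  by (simp add: vnorm_eq_sqrt_scalar_prod scalar_prod_self_nonneg)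

lemma vnorm_sq: "(vnorm v)\<^sup>2 = v \<bullet> v"
  by (simp add: vnorm_eq_sqrt_scalar_prod scalar_prod_self_nonneg)

lemma vnorm_eq_1_iff: "vnorm v = 1 \<longleftrightarrow> v \<bullet> v = 1"
  by (simp add: vnorm_eq_sqrt_scalar_prod)

lemma vnorm_smult: "vnorm (c \<cdot>\<^sub>v v) = \<bar>c\<bar> * vnorm v"
  by (simp add: vnorm_eq_sqrt_scalar_prod real_sqrt_mult)

lemma vnorm_uminus: "vnorm (- v) = vnorm v"
  by (simp add: vnorm_eq_sqrt_scalar_prod)

lemma abs_scalar_prod_le_vnorm:
  fixes v w :: "real vec"
  assumes "dim_vec w = dim_vec v"
  shows "\<bar>v \<bullet> w\<bar> \<le> vnorm v * vnorm w"
proof -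
  have "\<bar>v \<bullet> w\<bar> \<le> (\<Sum>i<dim_vec v. \<bar>v $ i\<bar> * \<bar>w $ i\<bar>)"
    unfolding scalar_prod_def using assms
    by (simp add: atLeast0LessThan abs_mult[symmetric] sum_abs del: abs_mult)
  also have "\<dots> \<le> vnorm v * vnorm w"
    using L2_set_mult_ineq[of "($) v" "($) w" "{..<dim_vec v}"] assms
    by (simp add: vnorm_eq_L2_set)
  finally show ?thesis .
qed

lemma scalar_prod_sq_le:
  fixes v w :: "real vec"
  assumes "dim_vec w = dim_vec v"
  shows "(v \<bullet> w)\<^sup>2 \<le> (v \<bullet> v) * (w \<bullet> w)"
proof -
  have "\<bar>v \<bullet> w\<bar>\<^sup>2 \<le> (vnorm v * vnorm w)\<^sup>2"
    using abs_scalar_prod_le_vnorm[OF assms] by (intro power_mono) auto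
  then show ?thesis by (simp add: power_mult_distrib vnorm_sq)
qed

lemma vnorm_mult_mat_vec_le_sum_rows:
  fixes N :: "real mat"
  assumes "dim_vec x = dim_col N"
  shows "vnorm (N *\<^sub>v x) \<le> (\<Sum>i<dim_row N. vnorm (row N i)) * vnorm x"
proof -
  have "vnorm (N *\<^sub>v x) = L2_set (\<lambda>i. row N i \<bullet> x) {..<dim_row N}"
    by (auto simp: vnorm_eq_L2_set intro: L2_set_cong)
  also have "\<dots> \<le> (\<Sum>i<dim_row N. \<bar>row N i \<bullet> x\<bar>)"
    by (rule L2_set_le_sum_abs)
  also have "\<dots> \<le> (\<Sum>i<dim_row N. vnorm (row N i) * vnorm x)"
    using assms by (intro sum_mono abs_scalar_prod_le_vnorm) auto
  finally show ?thesis by (simp add: sum_distrib_right)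
qed

lemma op_norm_set_bdd_above:
  fixes N :: "real mat"
  shows "bdd_above {vnorm (N *\<^sub>v x) | x. x \<in> carrier_vec (dim_col N) \<and> vnorm x = 1}"
proof (rule bdd_aboveI)
  fix y assume "y \<in> {vnorm (N *\<^sub>v x) | x. x \<in> carrier_vec (dim_col N) \<and> vnorm x = 1}"
  then obtain x where "x \<in> carrier_vec (dim_col N)" "vnorm x = 1" "y = vnorm (N *\<^sub>v x)"
    by blast
  then show "y \<le> (\<Sum>i<dim_row N. vnorm (row N i))"
    using vnorm_mult_mat_vec_le_sum_rows[of x N] by simp
qed

lemma vnorm_le_op_norm:
  fixes N :: "real mat"
  assumes "x \<in> carrier_vec (dim_col N)" and "vnorm x = 1"
  shows "vnorm (N *\<^sub>v x) \<le> op_norm N"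
  unfolding op_norm_def using assms by (intro cSup_upper op_norm_set_bdd_above) auto

lemma vnorm_mult_mat_vec_le_op_norm:
  fixes N :: "real mat"
  assumes x: "x \<in> carrier_vec (dim_col N)"
  shows "vnorm (N *\<^sub>v x) \<le> op_norm N * vnorm x"
proof (cases "vnorm x = 0")
  case True
  then show ?thesis
    using vnorm_mult_mat_vec_le_sum_rows[of x N] x vnorm_nonneg[of "N *\<^sub>v x"] by simp
next
  case False
  then have pos: "0 < vnorm x" using vnorm_nonneg[of x] by simp
  let ?y = "(1 / vnorm x) \<cdot>\<^sub>v x"
  have "vnorm (N *\<^sub>v ?y) \<le> op_norm N"
    using x pos by (intro vnorm_le_op_norm) (auto simp: vnorm_smult)
  moreover have "N *\<^sub>v ?y = (1 / vnorm x) \<cdot>\<^sub>v (N *\<^sub>v x)"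
    using x by (intro mult_mat_vec) auto
  ultimately show ?thesis using pos by (simp add: vnorm_smult field_simps)
qed

lemma abs_quadratic_form_le_op_norm:
  fixes N :: "real mat"
  assumes N: "N \<in> carrier_mat n n" and z: "z \<in> carrier_vec n"
  shows "\<bar>z \<bullet> (N *\<^sub>v z)\<bar> \<le> op_norm N * (z \<bullet> z)"
proof -
  have "\<bar>z \<bullet> (N *\<^sub>v z)\<bar> \<le> vnorm z * vnorm (N *\<^sub>v z)"
    using N z by (intro abs_scalar_prod_le_vnorm) auto
  also have "\<dots> \<le> vnorm z * (op_norm N * vnorm z)"
    using N z by (intro mult_left_mono vnorm_mult_mat_vec_le_op_norm vnorm_nonneg) auto
  finally show ?thesis by (simp add: vnorm_sq[symmetric] power2_eq_square ac_simps)
qed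

lemma smult_mult_mat_vec:
  fixes A :: "real mat"
  assumes "dim_vec v = dim_col A"
  shows "(c \<cdot>\<^sub>m A) *\<^sub>v v = c \<cdot>\<^sub>v (A *\<^sub>v v)"
  using assms by (intro eq_vecI) auto

lemma quadratic_form_add_smult:
  fixes M :: "real mat"
  assumes M: "M \<in> carrier_mat n n" and sym: "transpose_mat M = M"
    and x: "x \<in> carrier_vec n" and y: "y \<in> carrier_vec n"
  shows "(x + t \<cdot>\<^sub>v y) \<bullet> (M *\<^sub>v (x + t \<cdot>\<^sub>v y)) =
     x \<bullet> (M *\<^sub>v x) + 2 * t * (y \<bullet> (M *\<^sub>v x)) + t\<^sup>2 * (y \<bullet> (M *\<^sub>v y))"
proof -
  have Mx: "M *\<^sub>v x \<in> carrier_vec n" and My: "M *\<^sub>v y \<in> carrier_vec n" using M x y by auto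
  have "x \<bullet> (M *\<^sub>v y) = (transpose_mat M *\<^sub>v x) \<bullet> y"
    using transpose_vec_mult_scalar[OF M y x] by simp
  also have "\<dots> = y \<bullet> (M *\<^sub>v x)" using sym comm_scalar_prod[OF y Mx] by simp
  finally have swap: "x \<bullet> (M *\<^sub>v y) = y \<bullet> (M *\<^sub>v x)" .
  have "M *\<^sub>v (x + t \<cdot>\<^sub>v y) = M *\<^sub>v x + t \<cdot>\<^sub>v (M *\<^sub>v y)"
    using M x y by (simp add: mult_add_distrib_mat_vec mult_mat_vec)
  then show ?thesis using x y Mx My swap
    by (simp add: add_scalar_prod_distrib[of x n] scalar_prod_add_distrib[of _ n]
        power2_eq_square algebra_simps)
qed

lemma discriminant_le_of_nonneg_quadratic:
  fixes a b c :: real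
  assumes c: "0 \<le> c" and nonneg: "\<And>t. 0 \<le> a + 2 * b * t + c * t\<^sup>2"
  shows "b\<^sup>2 \<le> a * c"
proof (cases "c = 0")
  case True
  have "b = 0"
  proof (rule ccontr)
    assume "b \<noteq> 0"
    then show False using nonneg[of "- (a + 1) / (2 * b)"] True by simp
  qed
  with True show ?thesis by simp
next
  case False
  with c have "0 < c" by simp
  with nonneg[of "- b / c"] show ?thesis
    by (simp add: power2_eq_square field_simps)
qed

lemma psd_cauchy_schwarz:
  fixes N :: "real mat"
  assumes N: "N \<in> carrier_mat n n" and sym: "transpose_mat N = N"
    and psd: "\<And>z. z \<in> carrier_vec n \<Longrightarrow> 0 \<le> z \<bullet> (N *\<^sub>v z)"
    and x: "x \<in> carrier_vec n" and y: "y \<in> carrier_vec n"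
  shows "(y \<bullet> (N *\<^sub>v x))\<^sup>2 \<le> (x \<bullet> (N *\<^sub>v x)) * (y \<bullet> (N *\<^sub>v y))"
proof (rule discriminant_le_of_nonneg_quadratic)
  show "0 \<le> y \<bullet> (N *\<^sub>v y)" using psd[OF y] .
  show "0 \<le> x \<bullet> (N *\<^sub>v x) + 2 * (y \<bullet> (N *\<^sub>v x)) * t + y \<bullet> (N *\<^sub>v y) * t\<^sup>2" for t
    using psd[of "x + t \<cdot>\<^sub>v y"] quadratic_form_add_smult[OF N sym x y, of t] x y
    by (simp add: ac_simps)
qed

lemma psd_mult_mat_vec_sq_le:
  fixes N :: "real mat"
  assumes N: "N \<in> carrier_mat n n" and sym: "transpose_mat N = N"
    and psd: "\<And>z. z \<in> carrier_vec n \<Longrightarrow> 0 \<le> z \<bullet> (N *\<^sub>v z)"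
    and bound: "\<And>z. z \<in> carrier_vec n \<Longrightarrow> z \<bullet> (N *\<^sub>v z) \<le> R * (z \<bullet> z)"
    and x: "x \<in> carrier_vec n"
  shows "(N *\<^sub>v x) \<bullet> (N *\<^sub>v x) \<le> R * (x \<bullet> (N *\<^sub>v x))"
proof -
  define g where "g = N *\<^sub>v x"
  have g: "g \<in> carrier_vec n" unfolding g_def using N x by simp
  have "(g \<bullet> g)\<^sup>2 \<le> (x \<bullet> g) * (g \<bullet> (N *\<^sub>v g))"
    using psd_cauchy_schwarz[OF N sym psd x g] unfolding g_def by simp
  also have "\<dots> \<le> (x \<bullet> g) * (R * (g \<bullet> g))"
    using psd[OF x] bound[OF g] unfolding g_def by (intro mult_left_mono) auto
  finally have sq: "(g \<bullet> g) * (g \<bullet> g) \<le> (R * (x \<bullet> g)) * (g \<bullet> g)"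
    by (simp add: power2_eq_square ac_simps)
  show ?thesis
  proof (cases "g \<bullet> g = 0")
    case True
    have "0 \<le> R * (x \<bullet> g)"
    proof (cases "x \<bullet> g = 0")
      case False
      with psd[OF x] have "0 < x \<bullet> g" unfolding g_def by simp
      moreover have "0 < R * (x \<bullet> x)"
        using bound[OF x] \<open>0 < x \<bullet> g\<close> unfolding g_def by simp
      then have "0 < R" using scalar_prod_self_nonneg[of x] by (simp add: zero_less_mult_iff)
      ultimately show ?thesis by simp
    qed simp
    with True show ?thesis unfolding g_def by simp
  next
    case False
    with scalar_prod_self_nonneg[of g] have "0 < g \<bullet> g" by simp
    with sq show ?thesis unfolding g_def by simp
  qed
qed

definition rayleigh_max :: "real mat \<Rightarrow> real" where
  "rayleigh_max M = Sup {x \<bullet> (M *\<^sub>v x) | x. x \<in> carrier_vec (dim_col M) \<and> x \<bullet> x = 1}"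

lemma rayleigh_set_bdd_above:
  fixes M :: "real mat"
  assumes M: "M \<in> carrier_mat n n"
  shows "bdd_above {x \<bullet> (M *\<^sub>v x) | x. x \<in> carrier_vec (dim_col M) \<and> x \<bullet> x = 1}"
proof (rule bdd_aboveI)
  fix a assume "a \<in> {x \<bullet> (M *\<^sub>v x) | x. x \<in> carrier_vec (dim_col M) \<and> x \<bullet> x = 1}"
  then obtain x where "x \<in> carrier_vec n" "x \<bullet> x = 1" "a = x \<bullet> (M *\<^sub>v x)"
    using M by auto
  then show "a \<le> op_norm M" using abs_quadratic_form_le_op_norm[OF M, of x] by simp
qed

lemma quadratic_form_le_rayleigh_max_unit:
  fixes M :: "real mat"
  assumes M: "M \<in> carrier_mat n n" and x: "x \<in> carrier_vec n" and "x \<bullet> x = 1"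
  shows "x \<bullet> (M *\<^sub>v x) \<le> rayleigh_max M"
  unfolding rayleigh_max_def using assms by (intro cSup_upper rayleigh_set_bdd_above[OF M]) auto

lemma quadratic_form_le_rayleigh_max:
  fixes M :: "real mat"
  assumes M: "M \<in> carrier_mat n n" and z: "z \<in> carrier_vec n"
  shows "z \<bullet> (M *\<^sub>v z) \<le> rayleigh_max M * (z \<bullet> z)"
proof (cases "z \<bullet> z = 0")
  case True
  then show ?thesis using abs_quadratic_form_le_op_norm[OF M z] by simp
next
  case False
  then have pos: "0 < z \<bullet> z" using scalar_prod_self_nonneg[of z] by simp
  let ?x = "(1 / sqrt (z \<bullet> z)) \<cdot>\<^sub>v z"
  have "?x \<bullet> (M *\<^sub>v ?x) = (z \<bullet> (M *\<^sub>v z)) / (z \<bullet> z)"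
    using M z pos by (simp add: mult_mat_vec field_simps)
  moreover have "?x \<bullet> (M *\<^sub>v ?x) \<le> rayleigh_max M"
    using M z pos by (intro quadratic_form_le_rayleigh_max_unit[OF M]) (auto simp: field_simps)
  ultimately show ?thesis using pos by (simp add: divide_le_eq)
qed

lemma rayleigh_max_approx:
  fixes M :: "real mat"
  assumes M: "M \<in> carrier_mat n n" and n: "0 < n" and \<delta>: "0 < \<delta>"
  shows "\<exists>x \<in> carrier_vec n. x \<bullet> x = 1 \<and> rayleigh_max M - \<delta> < x \<bullet> (M *\<^sub>v x)"
proof -
  let ?Q = "{x \<bullet> (M *\<^sub>v x) | x. x \<in> carrier_vec (dim_col M) \<and> x \<bullet> x = 1}"
  have "?Q \<noteq> {}" using M n by (auto intro!: exI[of _ "unit_vec n 0"])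
  moreover have "rayleigh_max M - \<delta> < Sup ?Q" using \<delta> unfolding rayleigh_max_def by simp
  ultimately show ?thesis
    using less_cSup_iff[OF _ rayleigh_set_bdd_above[OF M]] M by auto
qed

lemma vnorm_le_of_not_eigenvalue:
  fixes M :: "real mat"
  assumes M: "M \<in> carrier_mat n n" and "\<not> eigenvalue M s"
  shows "\<exists>c. \<forall>x \<in> carrier_vec n. vnorm x \<le> c * vnorm (char_matrix M s *\<^sub>v x)"
proof -
  have "det (char_matrix M s) \<noteq> 0" using assms eigenvalue_det[OF M] by simp
  from det_non_zero_imp_unit[OF _ this, of n "()"] M
  obtain B where inv: "B * char_matrix M s = 1\<^sub>m n" and B: "B \<in> carrier_mat n n"
    unfolding Units_def ring_mat_def by auto
  have "vnorm x \<le> op_norm B * vnorm (char_matrix M s *\<^sub>v x)" if x: "x \<in> carrier_vec n" for x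
  proof -
    have "B *\<^sub>v (char_matrix M s *\<^sub>v x) = (B * char_matrix M s) *\<^sub>v x"
      using B M x by (intro assoc_mult_mat_vec[symmetric]) auto
    then have "B *\<^sub>v (char_matrix M s *\<^sub>v x) = x" using inv x by simp
    moreover have "char_matrix M s *\<^sub>v x \<in> carrier_vec n"
      using mult_mat_vec_carrier[OF char_matrix_closed[OF M] x] .
    ultimately show ?thesis using vnorm_mult_mat_vec_le_op_norm[of "char_matrix M s *\<^sub>v x" B] B
      by simp
  qed
  then show ?thesis by blast
qed

text \<open>With \<open>s\<close> the supremum of the Rayleigh quotient, \<open>N = s \<cdot> 1 - M\<close> is positive semidefinite,
  so \<open>N x\<close> is small whenever \<open>x\<close> nearly attains \<open>s\<close>; if \<open>s\<close> were no eigenvalue,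
  \<open>N\<close> would be invertible and \<open>N x\<close> bounded away from zero on unit vectors.\<close>
lemma rayleigh_max_eigenvalue:
  fixes M :: "real mat"
  assumes M: "M \<in> carrier_mat n n" and sym: "transpose_mat M = M" and n: "0 < n"
  shows "eigenvalue M (rayleigh_max M)"
proof (rule ccontr)
  define s where "s = rayleigh_max M"
  define N where "N = s \<cdot>\<^sub>m 1\<^sub>m n - M"
  assume "\<not> eigenvalue M (rayleigh_max M)"
  then obtain c where c: "\<And>x. x \<in> carrier_vec n \<Longrightarrow> vnorm x \<le> c * vnorm (char_matrix M s *\<^sub>v x)"
    using vnorm_le_of_not_eigenvalue[OF M] unfolding s_def by blast
  have N: "N \<in> carrier_mat n n" unfolding N_def using M by (rule minus_carrier_mat)
  have symN: "transpose_mat N = N"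
    unfolding N_def using M sym by (subst transpose_minus[of _ n n]) auto
  have char: "char_matrix M s = - N"
    unfolding N_def char_matrix_def using M by (intro eq_matI) auto
  have Nz: "z \<bullet> (N *\<^sub>v z) = s * (z \<bullet> z) - z \<bullet> (M *\<^sub>v z)" if z: "z \<in> carrier_vec n" for z
  proof -
    have "N *\<^sub>v z = s \<cdot>\<^sub>v z - M *\<^sub>v z"
      unfolding N_def using M z by (simp add: minus_mult_distrib_mat_vec[of _ n n] smult_mult_mat_vec)
    then show ?thesis using M z by (simp add: scalar_prod_minus_distrib[of _ n])
  qed
  have psd: "0 \<le> z \<bullet> (N *\<^sub>v z)" if "z \<in> carrier_vec n" for z
    using Nz[OF that] quadratic_form_le_rayleigh_max[OF M that] unfolding s_def by simp
  define R where "R = s + op_norm M"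
  have bound: "z \<bullet> (N *\<^sub>v z) \<le> R * (z \<bullet> z)" if "z \<in> carrier_vec n" for z
    using Nz[OF that] abs_quadratic_form_le_op_norm[OF M that] unfolding R_def
    by (simp add: algebra_simps)
  define K where "K = c\<^sup>2 * R"
  have gap: "1 \<le> K * (s - x \<bullet> (M *\<^sub>v x))" if x: "x \<in> carrier_vec n" "x \<bullet> x = 1" for x
  proof -
    have "vnorm x \<le> c * vnorm (N *\<^sub>v x)" using c[OF x(1)] N x by (simp add: char vnorm_uminus)
    then have "(vnorm x)\<^sup>2 \<le> c\<^sup>2 * ((N *\<^sub>v x) \<bullet> (N *\<^sub>v x))"
      using vnorm_nonneg[of x] by (metis power_mono power_mult_distrib vnorm_sq)
    also have "\<dots> \<le> c\<^sup>2 * (R * (x \<bullet> (N *\<^sub>v x)))"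
      by (intro mult_left_mono psd_mult_mat_vec_sq_le[OF N symN psd bound x(1)]) auto
    finally show ?thesis using x Nz[OF x(1)] unfolding K_def by (simp add: vnorm_sq)
  qed
  have "0 < 1 / (\<bar>K\<bar> + 1)" by simp
  from rayleigh_max_approx[OF M n this] obtain x where x: "x \<in> carrier_vec n" "x \<bullet> x = 1"
    and close: "s - 1 / (\<bar>K\<bar> + 1) < x \<bullet> (M *\<^sub>v x)"
    unfolding s_def by blast
  define d where "d = s - x \<bullet> (M *\<^sub>v x)"
  have d: "0 \<le> d" "d < 1 / (\<bar>K\<bar> + 1)"
    using quadratic_form_le_rayleigh_max_unit[OF M x] close unfolding d_def s_def by auto
  have "K * d \<le> \<bar>K\<bar> * d" using d by (intro mult_right_mono) auto
  also have "\<dots> \<le> \<bar>K\<bar> * (1 / (\<bar>K\<bar> + 1))" using d by (intro mult_left_mono) auto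
  also have "\<dots> < 1" by (simp add: field_simps)
  finally show False using gap[OF x] unfolding d_def by simp
qed

lemma eigenvalue_ge_quadratic_form:
  fixes M :: "real mat"
  assumes M: "M \<in> carrier_mat n n" and sym: "transpose_mat M = M"
    and y: "y \<in> carrier_vec n" and "y \<bullet> y = 1"
  shows "\<exists>s. eigenvalue M s \<and> y \<bullet> (M *\<^sub>v y) \<le> s"
proof -
  have "0 < n" using assms by (cases n) (auto simp: scalar_prod_def)
  then show ?thesis
    using rayleigh_max_eigenvalue[OF M sym] quadratic_form_le_rayleigh_max_unit[OF M y] assms
    by blast
qed

lemma kron_vec_scalar_prod_self:
  "kron_vec v w \<bullet> kron_vec v w = (v \<bullet> v) * (w \<bullet> w)"
proof -
  define k where "k = dim_vec v"
  define m where "m = dim_vec w"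
  have "kron_vec v w \<bullet> kron_vec v w = (\<Sum>r<k * m. (v $ (r div m) * w $ (r mod m))\<^sup>2)"
    unfolding kron_vec_def scalar_prod_def k_def m_def
    by (simp add: power2_eq_square atLeast0LessThan)
  also have "\<dots> = (\<Sum>p\<in>{..<k} \<times> {..<m}. (v $ fst p * w $ snd p)\<^sup>2)"
  proof (rule sum.reindex_bij_witness[where i = "\<lambda>p. fst p * m + snd p" and j = "\<lambda>r. (r div m, r mod m)"])
    fix r assume r: "r \<in> {..<k * m}"
    then have "0 < m" by (cases m) auto
    then show "fst (r div m, r mod m) * m + snd (r div m, r mod m) = r" by simp
    show "(r div m, r mod m) \<in> {..<k} \<times> {..<m}" using r \<open>0 < m\<close>
      by (auto simp: less_mult_imp_div_less)
  next
    fix p :: "nat \<times> nat" assume "p \<in> {..<k} \<times> {..<m}"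
    then obtain a b where ab: "p = (a, b)" "a < k" "b < m" by auto
    show "((fst p * m + snd p) div m, (fst p * m + snd p) mod m) = p" using ab by simp
    have "a * m + b < (a + 1) * m" using ab by simp
    also have "\<dots> \<le> k * m" using ab by (intro mult_right_mono) auto
    finally show "fst p * m + snd p \<in> {..<k * m}" using ab by simp
  qed simp
  also have "\<dots> = (\<Sum>a<k. (v $ a)\<^sup>2) * (\<Sum>b<m. (w $ b)\<^sup>2)"
    by (simp add: sum.cartesian_product split_beta sum_product power_mult_distrib)
  also have "\<dots> = (v \<bullet> v) * (w \<bullet> w)"
    unfolding scalar_prod_def k_def m_def by (simp add: power2_eq_square atLeast0LessThan)
  finally show ?thesis .
qed

lemma rank_one_mult_mat_vec:
  fixes v w x :: "real vec"
  assumes v: "v \<in> carrier_vec n" and w: "w \<in> carrier_vec m" and x: "x \<in> carrier_vec n"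
  shows "(mat_of_cols m [w] * mat_of_rows n [v]) *\<^sub>v x = (v \<bullet> x) \<cdot>\<^sub>v w"
proof -
  have "(mat_of_cols m [w] * mat_of_rows n [v]) *\<^sub>v x = mat_of_cols m [w] *\<^sub>v (mat_of_rows n [v] *\<^sub>v x)"
    using x by (intro assoc_mult_mat_vec) auto
  also have "mat_of_rows n [v] *\<^sub>v x = vec 1 (\<lambda>_. v \<bullet> x)"
  proof -
    have "row (mat_of_rows n [v]) 0 = v" using v by (intro eq_vecI) auto
    then show ?thesis using v x by (intro eq_vecI) auto
  qed
  also have "mat_of_cols m [w] *\<^sub>v vec 1 (\<lambda>_. v \<bullet> x) = (v \<bullet> x) \<cdot>\<^sub>v w"
    using w by (intro eq_vecI) (auto simp: mat_of_cols_def scalar_prod_def row_def)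
  finally show ?thesis .
qed

lemma quadratic_form_gram:
  fixes T :: "real mat"
  assumes T: "T \<in> carrier_mat m n" and x: "x \<in> carrier_vec n"
  shows "x \<bullet> ((transpose_mat T * T) *\<^sub>v x) = (T *\<^sub>v x) \<bullet> (T *\<^sub>v x)"
proof -
  have "(transpose_mat T * T) *\<^sub>v x = transpose_mat T *\<^sub>v (T *\<^sub>v x)" using T x by simp
  moreover have "(transpose_mat T *\<^sub>v (T *\<^sub>v x)) \<bullet> x = (T *\<^sub>v x) \<bullet> (T *\<^sub>v x)"
    using T x by (intro transpose_vec_mult_scalar) auto
  ultimately show ?thesis using T x by (simp add: comm_scalar_prod[of x n])
qed

lemma quadratic_form_gram_rank_one_perturbation:
  fixes A :: "real mat" and v w x :: "real vec"
  assumes A: "A \<in> carrier_mat m n" and v: "v \<in> carrier_vec n" and w: "w \<in> carrier_vec m"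
    and x: "x \<in> carrier_vec n"
    and T: "T = \<tau> \<cdot>\<^sub>m (mat_of_cols m [w] * mat_of_rows n [v]) + A"
  shows "x \<bullet> ((transpose_mat T * T) *\<^sub>v x) =
    \<tau>\<^sup>2 * (v \<bullet> x)\<^sup>2 * (w \<bullet> w) + 2 * \<tau> * (v \<bullet> x) * ((transpose_mat A *\<^sub>v w) \<bullet> x)
      + x \<bullet> ((transpose_mat A * A) *\<^sub>v x)"
proof -
  have P: "mat_of_cols m [w] * mat_of_rows n [v] \<in> carrier_mat m n" by auto
  have Tc: "T \<in> carrier_mat m n" unfolding T using P A by simp
  have Ax: "A *\<^sub>v x \<in> carrier_vec m" using A x by simp
  have "T *\<^sub>v x = (\<tau> * (v \<bullet> x)) \<cdot>\<^sub>v w + A *\<^sub>v x"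
    unfolding T using P A x
    by (simp add: add_mult_distrib_mat_vec[of _ m n] smult_mult_mat_vec rank_one_mult_mat_vec[OF v w x]
        smult_smult_assoc)
  then have "(T *\<^sub>v x) \<bullet> (T *\<^sub>v x) =
      (\<tau> * (v \<bullet> x))\<^sup>2 * (w \<bullet> w) + 2 * (\<tau> * (v \<bullet> x)) * (w \<bullet> (A *\<^sub>v x)) + (A *\<^sub>v x) \<bullet> (A *\<^sub>v x)"
    using w Ax
    by (simp add: add_scalar_prod_distrib[of _ m] scalar_prod_add_distrib[of _ m]
        comm_scalar_prod[of "A *\<^sub>v x" m w] power2_eq_square algebra_simps)
  moreover have "w \<bullet> (A *\<^sub>v x) = (transpose_mat A *\<^sub>v w) \<bullet> x"
    using transpose_vec_mult_scalar[OF A x w] by simp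
  ultimately show ?thesis
    using quadratic_form_gram[OF Tc x] quadratic_form_gram[OF A x]
    by (simp add: power_mult_distrib)
qed

lemma quadratic_form_spiked_gram:
  fixes A E :: "real mat" and v w x :: "real vec"
  assumes A: "A \<in> carrier_mat m n" and E: "E \<in> carrier_mat n n"
    and gram: "transpose_mat A * A = C \<cdot>\<^sub>m 1\<^sub>m n + E"
    and v: "v \<in> carrier_vec n" and w: "w \<in> carrier_vec m" "w \<bullet> w = 1"
    and T: "T = \<tau> \<cdot>\<^sub>m (mat_of_cols m [w] * mat_of_rows n [v]) + A"
    and x: "x \<in> carrier_vec n" "x \<bullet> x = 1"
  shows "x \<bullet> ((transpose_mat T * T) *\<^sub>v x) =
    \<tau>\<^sup>2 * (v \<bullet> x)\<^sup>2 + 2 * \<tau> * (v \<bullet> x) * ((transpose_mat A *\<^sub>v w) \<bullet> x) + C + x \<bullet> (E *\<^sub>v x)"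
proof -
  have "(transpose_mat A * A) *\<^sub>v x = C \<cdot>\<^sub>v x + E *\<^sub>v x"
    unfolding gram using E x by (simp add: add_mult_distrib_mat_vec[of _ n n] smult_mult_mat_vec)
  then have "x \<bullet> ((transpose_mat A * A) *\<^sub>v x) = C + x \<bullet> (E *\<^sub>v x)"
    using E x by (simp add: scalar_prod_add_distrib[of _ n])
  then show ?thesis using quadratic_form_gram_rank_one_perturbation[OF A v w(1) x(1) T] w(2)
    by simp
qed

lemma top_eigenvector_quadratic_form_ge:
  fixes M :: "real mat"
  assumes M: "M \<in> carrier_mat n n" and sym: "transpose_mat M = M"
    and top: "top_eigenvector M u" and u: "u \<bullet> u = 1"
    and v: "v \<in> carrier_vec n" and "v \<bullet> v = 1"
  shows "v \<bullet> (M *\<^sub>v v) \<le> u \<bullet> (M *\<^sub>v u)"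
proof -
  obtain lam where ev: "eigenvector M u lam" and max: "\<And>mu. eigenvalue M mu \<Longrightarrow> mu \<le> lam"
    using top unfolding top_eigenvector_def by blast
  then have "u \<in> carrier_vec n" "M *\<^sub>v u = lam \<cdot>\<^sub>v u" using M unfolding eigenvector_def by auto
  then have "u \<bullet> (M *\<^sub>v u) = lam" using u by simp
  moreover obtain s where "eigenvalue M s" "v \<bullet> (M *\<^sub>v v) \<le> s"
    using eigenvalue_ge_quadratic_form[OF M sym v] assms by blast
  ultimately show ?thesis using max by force
qed

lemma spiked_gram_top_eigenvector_alignment:
  fixes A E :: "real mat" and v w u :: "real vec" and \<tau> \<epsilon> C :: real
  assumes v: "v \<in> carrier_vec n" "vnorm v = 1" and w: "w \<in> carrier_vec m" "vnorm w = 1"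
    and \<tau>: "0 < \<tau>" and A: "A \<in> carrier_mat m n" and E: "E \<in> carrier_mat n n"
    and gram: "transpose_mat A * A = C \<cdot>\<^sub>m 1\<^sub>m n + E"
    and E_small: "op_norm E \<le> \<epsilon> * \<tau>\<^sup>2"
    and cross_small: "vnorm (transpose_mat A *\<^sub>v w) \<le> \<epsilon> * \<tau>"
    and T: "T = \<tau> \<cdot>\<^sub>m (mat_of_cols m [w] * mat_of_rows n [v]) + A"
    and top: "top_eigenvector (transpose_mat T * T) u" and u1: "vnorm u = 1"
  shows "1 - 6 * \<epsilon> \<le> (u \<bullet> v)\<^sup>2"
proof -
  define b where "b = transpose_mat A *\<^sub>v w"
  define f where "f x = x \<bullet> ((transpose_mat T * T) *\<^sub>v x)" for x
  have Tc: "T \<in> carrier_mat m n" unfolding T using A by auto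
  have u: "u \<in> carrier_vec n"
    using top Tc unfolding top_eigenvector_def eigenvector_def by auto
  have vv: "v \<bullet> v = 1" and ww: "w \<bullet> w = 1" and uu: "u \<bullet> u = 1"
    using v w u1 by (simp_all add: vnorm_eq_1_iff)
  have f: "f x = \<tau>\<^sup>2 * (v \<bullet> x)\<^sup>2 + 2 * \<tau> * (v \<bullet> x) * (b \<bullet> x) + C + x \<bullet> (E *\<^sub>v x)"
    if "x \<in> carrier_vec n" "x \<bullet> x = 1" for x
    unfolding f_def b_def using quadratic_form_spiked_gram[OF A E gram v(1) w(1) ww T that] .
  have b_small: "\<bar>b \<bullet> x\<bar> \<le> \<epsilon> * \<tau>" if "x \<in> carrier_vec n" "vnorm x = 1" for x
    using abs_scalar_prod_le_vnorm[of x b] that A w cross_small unfolding b_def by simp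
  have E_form_small: "\<bar>x \<bullet> (E *\<^sub>v x)\<bar> \<le> \<epsilon> * \<tau>\<^sup>2" if "x \<in> carrier_vec n" "x \<bullet> x = 1" for x
    using abs_quadratic_form_le_op_norm[OF E that(1)] that E_small by simp
  define c where "c = v \<bullet> u"
  have "c\<^sup>2 \<le> 1" using scalar_prod_sq_le[of u v] u v vv uu unfolding c_def by simp
  then have "\<bar>c\<bar> \<le> 1" by (simp add: abs_le_square_iff[of c 1, simplified])
  then have "\<bar>c * (b \<bullet> u)\<bar> \<le> 1 * (\<epsilon> * \<tau>)"
    unfolding abs_mult using b_small[OF u u1] by (intro mult_mono) auto
  then have cross_u: "\<tau> * (c * (b \<bullet> u)) \<le> \<epsilon> * \<tau>\<^sup>2"
    using \<tau> mult_left_mono[of "c * (b \<bullet> u)" "\<epsilon> * \<tau>" \<tau>] by (simp add: power2_eq_square)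
  have cross_v: "- (\<epsilon> * \<tau>\<^sup>2) \<le> \<tau> * (b \<bullet> v)"
    using \<tau> abs_le_D2[OF b_small[OF v]] mult_left_mono[of "- (\<epsilon> * \<tau>)" "b \<bullet> v" \<tau>]
    by (simp add: power2_eq_square ac_simps)
  have "f v \<le> f u"
    unfolding f_def using top_eigenvector_quadratic_form_ge[OF _ _ top uu v(1) vv] Tc
    by (simp add: transpose_mult)
  then have "\<tau>\<^sup>2 + 2 * (\<tau> * (b \<bullet> v)) + v \<bullet> (E *\<^sub>v v)
      \<le> \<tau>\<^sup>2 * c\<^sup>2 + 2 * (\<tau> * (c * (b \<bullet> u))) + u \<bullet> (E *\<^sub>v u)"
    using f[OF v(1) vv] f[OF u uu] vv unfolding c_def by (simp add: ac_simps)
  moreover have "- (\<epsilon> * \<tau>\<^sup>2) \<le> v \<bullet> (E *\<^sub>v v)" "u \<bullet> (E *\<^sub>v u) \<le> \<epsilon> * \<tau>\<^sup>2"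
    using E_form_small[OF v(1) vv] E_form_small[OF u uu] by simp_all
  ultimately have "\<tau>\<^sup>2 * (1 - 6 * \<epsilon>) \<le> \<tau>\<^sup>2 * c\<^sup>2"
    using cross_u cross_v by (simp add: algebra_simps)
  then show ?thesis using \<tau> comm_scalar_prod[OF u v(1)] unfolding c_def by simp
qed

theorem mainTheorem9:
  "\<exists>K::real. \<forall>(n::nat) (v0::real vec) (\<tau>::real) (\<epsilon>::real) (A::real mat) (C::real) (E::real mat) (u::real vec).
     v0 \<in> carrier_vec n \<longrightarrow> vnorm v0 = 1 \<longrightarrow> \<tau> > 0 \<longrightarrow> \<epsilon> \<ge> 0 \<longrightarrow>
     A \<in> carrier_mat (n * n) n \<longrightarrow>
     C \<ge> 0 \<longrightarrow> E \<in> carrier_mat n n \<longrightarrow>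
     transpose_mat A * A = C \<cdot>\<^sub>m 1\<^sub>m n + E \<longrightarrow>
     op_norm E \<le> \<epsilon> * \<tau>^2 \<longrightarrow>
     vnorm (transpose_mat A *\<^sub>v kron_vec v0 v0) \<le> \<epsilon> * \<tau> \<longrightarrow>
     (let T = \<tau> \<cdot>\<^sub>m (mat_of_cols (n * n) [kron_vec v0 v0] * mat_of_rows n [v0]) + A in
       top_eigenvector (transpose_mat T * T) u \<longrightarrow> vnorm u = 1 \<longrightarrow>
       (u \<bullet> v0)^2 \<ge> 1 - K * \<epsilon>)"
proof (rule exI[of _ 6], intro allI impI, unfold Let_def, intro impI)
  fix n v0 \<tau> \<epsilon> A C E u
  assume v0: "v0 \<in> carrier_vec n" "vnorm v0 = 1" and "\<tau> > 0"
    and "A \<in> carrier_mat (n * n) n" "E \<in> carrier_mat n n"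
    and "transpose_mat A * A = C \<cdot>\<^sub>m 1\<^sub>m n + E" "op_norm E \<le> \<epsilon> * \<tau>^2"
    and "vnorm (transpose_mat A *\<^sub>v kron_vec v0 v0) \<le> \<epsilon> * \<tau>"
    and "top_eigenvector (transpose_mat (\<tau> \<cdot>\<^sub>m (mat_of_cols (n * n) [kron_vec v0 v0] *
        mat_of_rows n [v0]) + A) * (\<tau> \<cdot>\<^sub>m (mat_of_cols (n * n) [kron_vec v0 v0] *
        mat_of_rows n [v0]) + A)) u"
    and "vnorm u = 1"
  moreover have "kron_vec v0 v0 \<in> carrier_vec (n * n)" "vnorm (kron_vec v0 v0) = 1"
    using v0 kron_vec_scalar_prod_self[of v0 v0]
    by (auto simp: vnorm_eq_1_iff) (simp add: kron_vec_def)
  ultimately show "1 - 6 * \<epsilon> \<le> (u \<bullet> v0)\<^sup>2"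
    by (intro spiked_gram_top_eigenvector_alignment[of v0 n "kron_vec v0 v0" "n * n"]) auto
qed

end
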